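(* In the Setting below, $N_{\mathcal M}$ is a subalgebra of $\mathcal M$ (i.e. $N_{\mathcal M}N_{\mathcal M}\subseteq N_{\mathcal M}$) and $N_{\mathcal M}J_{\mathcal M}\subseteq J_{\mathcal M}$.
   Context: Setting. Let $\mathbb F$ be a field of characteristic different from $2$ and $3$. A Malcev algebra is an anticommutative algebra $\mathcal M$ over $\mathbb F$ satisfying $(xz)(yt)=((xy)z)t+((yz)t)x+((zt)x)y+((tx)y)z$. Products are left-normed: $xyz=(xy)z$, $xyzt=((xy)z)t$. Put $J(x,y,z)=xyz+yzx+zxy$ (the Jacobian), $\{x,y,z\}=xyz-xzy+2x(yz)$, and $h(y,z,t,x,u)=\{yz,t,u\}x+\{yz,t,x\}u+\{yx,z,u\}t+\{yu,z,x\}t$. The variety $\mathcal H$ consists of the Malcev algebras satisfying $h(y,z,t,x,u)=0$ identically. The centroid $\Gamma(\mathcal M)$ is the set of linear maps $\alpha$ of $\mathcal M$ (written on the right) with $(xy)\alpha=x(y\alpha)=(x\alpha)y$ for all $x,y$. Put $p(x,y,z,t)=-\{zt,x,y\}-\{yt,z,x\}+\{xt,y,z\}$ and define the operator $\alpha(y,z,t)$ by $x\,\alpha(y,z,t)=p(x,y,z,t)$; for $\mathcal M\in\mathcal H$ these operators lie in $\Gamma(\mathcal M)$. Let $L=\mathfrak{sl}_2(\mathbb F)$ with basis $E,H,F$ and products $EH=E$, $FH=-F$, $EF=\tfrac12 H$. Standing assumption: $\mathcal M\in\mathcal H$ contains $L$ as a subalgebra and $mL\neq 0$ for every $0\neq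 m\in\mathcal M$. Define $N_{\mathcal M}=\{m\in\mathcal M: J(m,a,b)=0\ \forall a,b\in L\}$ and $J_{\mathcal M}=\{m\in\mathcal M:\{m,a,b\}=0\ \forall a,b\in L\}$. Known facts (from prior work): $\mathcal M=N_{\mathcal M}\oplus J_{\mathcal M}$; $J_{\mathcal M}$ is a direct sum of $L$-submodules $V_{2i}$, each with a basis $\{u_i,v_i\}$ satisfying $u_iH=u_i$, $v_iH=-v_i$, $u_iE=v_i$, $u_iF=0$, $v_iE=0$, $v_iF=-u_i$; and, letting $U$ be the linear span of the operators $\alpha(m,a,b)$ ($m\in\mathcal M$, $a,b\in L$), $U\subseteq\Gamma(\mathcal M)$ and $N_{\mathcal M}=\sum_{\alpha\in U}L\alpha$. *)

theory Defs
  imports Complex_Main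
begin

text \<open>An algebra over a field: a vector space (scalar multiplication sm) with a bilinear product mul.
  Products are written on the right, left-normed: xyz = mul (mul x y) z.\<close>

definition bilinear_prod :: "('f::field \<Rightarrow> 'm::ab_group_add \<Rightarrow> 'm) \<Rightarrow> ('m \<Rightarrow> 'm \<Rightarrow> 'm) \<Rightarrow> bool" where
  "bilinear_prod sm mul \<longleftrightarrow>
     (\<forall>x y z. mul (x + y) z = mul x z + mul y z \<and> mul x (y + z) = mul x y + mul x z) \<and>
     (\<forall>c x y. mul (sm c x) y = sm c (mul x y) \<and> mul x (sm c y) = sm c (mul x y))"

definition malcev :: "('f::field \<Rightarrow> 'm::ab_group_add \<Rightarrow> 'm) \<Rightarrow> ('m \<Rightarrow> 'm \<Rightarrow> 'm) \<Rightarrow> bool" where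
  "malcev sm mul \<longleftrightarrow> Vector_Spaces.vector_space sm \<and> bilinear_prod sm mul \<and>
     (\<forall>x. mul x x = 0) \<and>
     (\<forall>x y z t. mul (mul x z) (mul y t) =
        mul (mul (mul x y) z) t + mul (mul (mul y z) t) x + mul (mul (mul z t) x) y
        + mul (mul (mul t x) y) z)"

definition jacobian :: "('m::ab_group_add \<Rightarrow> 'm \<Rightarrow> 'm) \<Rightarrow> 'm \<Rightarrow> 'm \<Rightarrow> 'm \<Rightarrow> 'm" where
  "jacobian mul x y z = mul (mul x y) z + mul (mul y z) x + mul (mul z x) y"

definition trip :: "('f::field \<Rightarrow> 'm::ab_group_add \<Rightarrow> 'm) \<Rightarrow> ('m \<Rightarrow> 'm \<Rightarrow> 'm) \<Rightarrow> 'm \<Rightarrow> 'm \<Rightarrow> 'm \<Rightarrow> 'm" where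
  "trip sm mul x y z = mul (mul x y) z - mul (mul x z) y + sm 2 (mul x (mul y z))"

definition hpoly :: "('f::field \<Rightarrow> 'm::ab_group_add \<Rightarrow> 'm) \<Rightarrow> ('m \<Rightarrow> 'm \<Rightarrow> 'm) \<Rightarrow> 'm \<Rightarrow> 'm \<Rightarrow> 'm \<Rightarrow> 'm \<Rightarrow> 'm \<Rightarrow> 'm" where
  "hpoly sm mul y z t x u =
     mul (trip sm mul (mul y z) t u) x + mul (trip sm mul (mul y z) t x) u
     + mul (trip sm mul (mul y x) z u) t + mul (trip sm mul (mul y u) z x) t"

definition in_H :: "('f::field \<Rightarrow> 'm::ab_group_add \<Rightarrow> 'm) \<Rightarrow> ('m \<Rightarrow> 'm \<Rightarrow> 'm) \<Rightarrow> bool" where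
  "in_H sm mul \<longleftrightarrow> malcev sm mul \<and> (\<forall>y z t x u. hpoly sm mul y z t x u = 0)"

text \<open>Centroid (maps written on the right: x alpha = alpha x).\<close>
definition centroid :: "('f::field \<Rightarrow> 'm::ab_group_add \<Rightarrow> 'm) \<Rightarrow> ('m \<Rightarrow> 'm \<Rightarrow> 'm) \<Rightarrow> ('m \<Rightarrow> 'm) set" where
  "centroid sm mul = {\<alpha>. Vector_Spaces.linear sm sm \<alpha> \<and>
      (\<forall>x y. \<alpha> (mul x y) = mul x (\<alpha> y) \<and> \<alpha> (mul x y) = mul (\<alpha> x) y)}"

definition ppoly :: "('f::field \<Rightarrow> 'm::ab_group_add \<Rightarrow> 'm) \<Rightarrow> ('m \<Rightarrow> 'm \<Rightarrow> 'm) \<Rightarrow> 'm \<Rightarrow> 'm \<Rightarrow> 'm \<Rightarrow> 'm \<Rightarrow> 'm" where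
  "ppoly sm mul x y z t = - trip sm mul (mul z t) x y - trip sm mul (mul y t) z x + trip sm mul (mul x t) y z"

definition alpha_op :: "('f::field \<Rightarrow> 'm::ab_group_add \<Rightarrow> 'm) \<Rightarrow> ('m \<Rightarrow> 'm \<Rightarrow> 'm) \<Rightarrow> 'm \<Rightarrow> 'm \<Rightarrow> 'm \<Rightarrow> ('m \<Rightarrow> 'm)" where
  "alpha_op sm mul y z t = (\<lambda>x. ppoly sm mul x y z t)"

definition Uops :: "('f::field \<Rightarrow> 'm::ab_group_add \<Rightarrow> 'm) \<Rightarrow> ('m \<Rightarrow> 'm \<Rightarrow> 'm) \<Rightarrow> 'm set \<Rightarrow> ('m \<Rightarrow> 'm) set" where
  "Uops sm mul L = {(\<lambda>x. \<Sum>i<(n::nat). sm (c i) (alpha_op sm mul (m i) (a i) (b i) x)) | n c m a b.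
       \<forall>i<n. a i \<in> L \<and> b i \<in> L}"

definition Nset :: "('m::ab_group_add \<Rightarrow> 'm \<Rightarrow> 'm) \<Rightarrow> 'm set \<Rightarrow> 'm set" where
  "Nset mul L = {m. \<forall>a\<in>L. \<forall>b\<in>L. jacobian mul m a b = 0}"

definition Jset :: "('f::field \<Rightarrow> 'm::ab_group_add \<Rightarrow> 'm) \<Rightarrow> ('m \<Rightarrow> 'm \<Rightarrow> 'm) \<Rightarrow> 'm set \<Rightarrow> 'm set" where
  "Jset sm mul L = {m. \<forall>a\<in>L. \<forall>b\<in>L. trip sm mul m a b = 0}"

end

theory Submission
  imports Defs
begin

text \<open>Elements of the centroid commute with multiplication, so they preserve \<open>N\<close> and \<open>J\<close>
  (both are cut out by multilinear conditions) and satisfy \<open>\<alpha>(a) \<beta>(b) = \<beta>(\<alpha>(ab))\<close>. Since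
  \<open>sl\<^sub>2\<close> is a Lie algebra, \<open>ab \<in> L\<close> has vanishing Jacobians with \<open>L\<close>, i.e. \<open>ab \<in> N\<close>; so the
  products of the spanning vectors \<open>\<alpha>(a)\<close> of \<open>N\<close> lie in \<open>N\<close>, and \<open>NN \<subseteq> N\<close> by bilinearity.
  Likewise \<open>\<alpha>(a) y = - \<alpha>(ya) \<in> J\<close> for \<open>y \<in> J\<close>, because \<open>JL \<subseteq> J\<close> by the explicit action of \<open>L\<close>
  on the basis of \<open>J\<close>.\<close>

lemma jacobian_cycle: "jacobian mul x a b = jacobian mul a b x"
  by (simp add: jacobian_def algebra_simps)

lemma centroid_mul_left:
  "\<alpha> \<in> centroid sm mul \<Longrightarrow> mul (\<alpha> x) y = \<alpha> (mul x y)"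
  and centroid_mul_right:
  "\<alpha> \<in> centroid sm mul \<Longrightarrow> mul x (\<alpha> y) = \<alpha> (mul x y)"
  unfolding centroid_def by (metis (mono_tags, lifting) mem_Collect_eq)+

lemma centroid_jacobian:
  assumes "\<alpha> \<in> centroid sm mul"
  shows "jacobian mul (\<alpha> x) a b = \<alpha> (jacobian mul x a b)"
proof -
  interpret Vector_Spaces.linear sm sm \<alpha>
    using assms by (simp add: centroid_def)
  show ?thesis
    using assms by (simp add: jacobian_def centroid_mul_left centroid_mul_right add)
qed

lemma centroid_trip:
  assumes "\<alpha> \<in> centroid sm mul"
  shows "trip sm mul (\<alpha> x) a b = \<alpha> (trip sm mul x a b)"
proof -
  interpret Vector_Spaces.linear sm sm \<alpha>
    using assms by (simp add: centroid_def)
  show ?thesis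
    using assms by (simp add: trip_def centroid_mul_left centroid_mul_right add diff scale)
qed

lemma centroid_Nset:
  assumes "\<alpha> \<in> centroid sm mul" and "x \<in> Nset mul L"
  shows "\<alpha> x \<in> Nset mul L"
proof -
  interpret Vector_Spaces.linear sm sm \<alpha>
    using assms by (simp add: centroid_def)
  show ?thesis
    using assms by (simp add: Nset_def centroid_jacobian)
qed

lemma centroid_Jset:
  assumes "\<alpha> \<in> centroid sm mul" and "x \<in> Jset sm mul L"
  shows "\<alpha> x \<in> Jset sm mul L"
proof -
  interpret Vector_Spaces.linear sm sm \<alpha>
    using assms by (simp add: centroid_def)
  show ?thesis
    using assms by (simp add: Jset_def centroid_trip)
qed

locale bilinear_algebra = vector_space scale
  for scale :: "'f::field \<Rightarrow> 'm::ab_group_add \<Rightarrow> 'm" +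
  fixes mul :: "'m \<Rightarrow> 'm \<Rightarrow> 'm"
  assumes bilinear: "bilinear_prod scale mul"
begin

lemma mul_add_left: "mul (x + y) z = mul x z + mul y z"
  and mul_add_right: "mul x (y + z) = mul x y + mul x z"
  and mul_scale_left: "mul (scale c x) y = scale c (mul x y)"
  and mul_scale_right: "mul x (scale c y) = scale c (mul x y)"
  using bilinear by (simp_all add: bilinear_prod_def)

lemma mul_zero_left: "mul 0 y = 0"
  using mul_add_left[of 0 0 y] by simp

lemma mul_zero_right: "mul x 0 = 0"
  using mul_add_right[of x 0 0] by simp

lemma mul_minus_left: "mul (- x) y = - mul x y"
  using mul_add_left[of x "- x" y] by (simp add: mul_zero_left add_eq_0_iff2)

lemma mul_minus_right: "mul x (- y) = - mul x y"
  using mul_add_right[of x y "- y"] by (simp add: mul_zero_right add_eq_0_iff2)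

lemma mul_anticommute:
  assumes "\<And>x. mul x x = 0"
  shows "mul x y = - mul y x"
proof -
  have "mul (x + y) (x + y) = mul x y + mul y x"
    unfolding mul_add_left mul_add_right by (simp add: assms)
  then have "mul x y + mul y x = 0"
    by (simp add: assms)
  then show ?thesis
    by (metis add_eq_0_iff2)
qed

lemma subspace_mul_left_vimage: "subspace C \<Longrightarrow> subspace {y. mul x y \<in> C}"
  and subspace_mul_right_vimage: "subspace C \<Longrightarrow> subspace {x. mul x y \<in> C}"
  by (simp_all add: subspace_def mul_add_left mul_add_right mul_scale_left mul_scale_right
      mul_zero_left mul_zero_right)

lemma span_mul_closed:
  assumes "\<And>a b. a \<in> A \<Longrightarrow> b \<in> B \<Longrightarrow> mul a b \<in> C" and "subspace C"
    and "x \<in> span A" and "y \<in> span B"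
  shows "mul x y \<in> C"
proof -
  have "mul a y \<in> C" if "a \<in> A" for a
    using \<open>y \<in> span B\<close> subspace_mul_left_vimage[OF \<open>subspace C\<close>] assms(1)[OF that]
    by (rule span_induct)
  then show ?thesis
    using \<open>x \<in> span A\<close> subspace_mul_right_vimage[OF \<open>subspace C\<close>]
    by (rule_tac span_induct) auto
qed

lemma jacobian_add_left: "jacobian mul (x + y) a b = jacobian mul x a b + jacobian mul y a b"
  and jacobian_scale_left: "jacobian mul (scale c x) a b = scale c (jacobian mul x a b)"
  by (simp_all add: jacobian_def mul_add_left mul_add_right mul_scale_left mul_scale_right
      scale_right_distrib algebra_simps)

lemma subspace_jacobian_kernel: "subspace {x. jacobian mul x a b = 0}"
  using jacobian_add_left jacobian_scale_left
  by (simp add: subspace_def jacobian_def mul_zero_left mul_zero_right)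

lemma jacobian_span_eq_0:
  assumes "\<And>x a b. x \<in> A \<Longrightarrow> a \<in> A \<Longrightarrow> b \<in> A \<Longrightarrow> jacobian mul x a b = 0"
    and "x \<in> span A" "a \<in> span A" "b \<in> span A"
  shows "jacobian mul x a b = 0"
proof -
  have first_arg: "jacobian mul x a b = 0"
    if "x \<in> span A" and "\<And>x. x \<in> A \<Longrightarrow> jacobian mul x a b = 0" for x a b
    using that(1) subspace_jacobian_kernel that(2) by (rule span_induct) auto
  \<comment> \<open>extend one argument at a time, rotating it into first position\<close>
  have span_A_A: "jacobian mul x a b = 0" if "x \<in> span A" "a \<in> A" "b \<in> A" for x a b
    using that(1) by (rule first_arg) (use assms(1) that in auto)
  have span_span_A: "jacobian mul x a b = 0" if "x \<in> span A" "a \<in> span A" "b \<in> A" for x a b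
  proof -
    have "jacobian mul a b x = 0"
      using that(2) by (rule first_arg) (metis jacobian_cycle span_A_A that(1,3))
    then show ?thesis
      by (metis jacobian_cycle)
  qed
  have "jacobian mul b x a = 0"
    using assms(4) by (rule first_arg) (metis jacobian_cycle span_span_A assms(2,3))
  then show ?thesis
    by (metis jacobian_cycle)
qed

lemma span_centroid_images_mul_closed:
  assumes "U \<subseteq> centroid scale mul" and "subspace N"
    and "\<And>a b. a \<in> L \<Longrightarrow> b \<in> L \<Longrightarrow> mul a b \<in> N"
    and "\<And>\<alpha> x. \<alpha> \<in> U \<Longrightarrow> x \<in> N \<Longrightarrow> \<alpha> x \<in> N"
    and "x \<in> span (\<Union>\<alpha>\<in>U. \<alpha> ` L)" "y \<in> span (\<Union>\<alpha>\<in>U. \<alpha> ` L)"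
  shows "mul x y \<in> N"
proof (rule span_mul_closed[OF _ \<open>subspace N\<close> assms(5,6)])
  fix g h assume "g \<in> (\<Union>\<alpha>\<in>U. \<alpha> ` L)" "h \<in> (\<Union>\<alpha>\<in>U. \<alpha> ` L)"
  then obtain \<alpha> \<beta> a b where "\<alpha> \<in> U" "\<beta> \<in> U" "a \<in> L" "b \<in> L" "g = \<alpha> a" "h = \<beta> b"
    by blast
  moreover from this have "mul g h = \<beta> (\<alpha> (mul a b))"
    using assms(1) centroid_mul_left[of \<alpha> scale mul] centroid_mul_right[of \<beta> scale mul]
    by (simp add: subset_iff)
  ultimately show "mul g h \<in> N"
    using assms(3,4) by simp
qed

lemma span_centroid_images_mul_invariant:
  assumes "\<And>x. mul x x = 0" and "U \<subseteq> centroid scale mul" and "subspace J"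
    and "\<And>y a. y \<in> J \<Longrightarrow> a \<in> L \<Longrightarrow> mul y a \<in> J"
    and "\<And>\<alpha> y. \<alpha> \<in> U \<Longrightarrow> y \<in> J \<Longrightarrow> \<alpha> y \<in> J"
    and "x \<in> span (\<Union>\<alpha>\<in>U. \<alpha> ` L)" "y \<in> J"
  shows "mul x y \<in> J"
proof (rule span_mul_closed[OF _ \<open>subspace J\<close> assms(6)])
  fix g z assume "g \<in> (\<Union>\<alpha>\<in>U. \<alpha> ` L)" "z \<in> J"
  then obtain \<alpha> a where "\<alpha> \<in> U" "a \<in> L" "g = \<alpha> a"
    by blast
  moreover from this have "mul g z = \<alpha> (- mul z a)"
    using assms(2) centroid_mul_left[of \<alpha> scale mul] mul_anticommute[OF assms(1), of a z]
    by (simp add: subset_iff)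
  ultimately show "mul g z \<in> J"
    using assms(3-5) \<open>z \<in> J\<close> by (simp add: subspace_neg)
next
  show "y \<in> span J"
    using assms(7) by (rule span_base)
qed

end

locale sl2_triple = bilinear_algebra scale mul
  for scale :: "'f::field \<Rightarrow> 'm::ab_group_add \<Rightarrow> 'm" and mul +
  fixes E H F :: 'm
  assumes mul_self: "mul x x = 0"
    and EH: "mul E H = E" and FH: "mul F H = - F" and EF: "mul E F = scale (1/2) H"
begin

lemmas sl2_table = EH FH EF mul_self
  mul_anticommute[OF mul_self, of H E, unfolded EH]
  mul_anticommute[OF mul_self, of H F, unfolded FH minus_minus]
  mul_anticommute[OF mul_self, of F E, unfolded EF]
  mul_zero_left mul_zero_right mul_minus_left mul_minus_right mul_scale_left mul_scale_right

lemma sl2_mul_closed: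
  assumes "a \<in> span {E, H, F}" "b \<in> span {E, H, F}"
  shows "mul a b \<in> span {E, H, F}"
proof (rule span_mul_closed[OF _ subspace_span assms])
  have "E \<in> span {E, H, F}" "H \<in> span {E, H, F}" "F \<in> span {E, H, F}"
    by (simp_all add: span_base)
  then show "mul a b \<in> span {E, H, F}" if "a \<in> {E, H, F}" "b \<in> {E, H, F}" for a b
    using that by (auto simp: sl2_table span_neg span_scale span_zero)
qed

lemma sl2_jacobian_eq_0:
  assumes "x \<in> span {E, H, F}" "a \<in> span {E, H, F}" "b \<in> span {E, H, F}"
  shows "jacobian mul x a b = 0"
  by (rule jacobian_span_eq_0[OF _ assms]) (auto simp: jacobian_def sl2_table)

end

theorem lemmal2:
  fixes sm :: "'f::field \<Rightarrow> 'm::ab_group_add \<Rightarrow> 'm"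
    and mul :: "'m \<Rightarrow> 'm \<Rightarrow> 'm"
    and E H F :: 'm
    and u v :: "'i \<Rightarrow> 'm"
    and I :: "'i set"
  defines "L \<equiv> module.span sm {E, H, F}"
  defines "N \<equiv> Nset mul L"
  defines "J \<equiv> Jset sm mul L"
  assumes char2: "(2::'f) \<noteq> 0" and char3: "(3::'f) \<noteq> 0"
    and inH: "in_H sm mul"
    (* L = sl_2 is a subalgebra of M *)
    and EHF_distinct: "distinct [E, H, F]"
    and EHF_indep: "\<not> module.dependent sm {E, H, F}"
    and EH: "mul E H = E" and FH: "mul F H = - F" and EF: "mul E F = sm (1/2) H"
    (* standing assumption: mL \<noteq> 0 for m \<noteq> 0 *)
    and faithful: "\<forall>m. m \<noteq> 0 \<longrightarrow> (\<exists>a\<in>L. mul m a \<noteq> 0)"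
    (* known facts from prior work *)
    and dsum: "N \<inter> J = {0}" "\<forall>m. \<exists>n\<in>N. \<exists>j\<in>J. m = n + j"
    and J_basis: "inj_on u I" "inj_on v I" "u ` I \<inter> v ` I = {}"
      "\<not> module.dependent sm (u ` I \<union> v ` I)"
      "module.span sm (u ` I \<union> v ` I) = J"
    and J_action: "\<forall>i\<in>I. mul (u i) H = u i \<and> mul (v i) H = - v i \<and> mul (u i) E = v i
        \<and> mul (u i) F = 0 \<and> mul (v i) E = 0 \<and> mul (v i) F = - u i"
    and U_centroid: "Uops sm mul L \<subseteq> centroid sm mul"
    and N_eq: "N = module.span sm (\<Union>\<alpha>\<in>Uops sm mul L. \<alpha> ` L)"
  shows "(\<forall>x\<in>N. \<forall>y\<in>N. mul x y \<in> N) \<and> (\<forall>x\<in>N. \<forall>y\<in>J. mul x y \<in> J)"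
proof -
  have "vector_space sm" "bilinear_prod sm mul" "\<forall>x. mul x x = 0"
    using inH by (simp_all add: in_H_def malcev_def)
  then interpret sl2_triple sm mul E H F
    by (simp add: sl2_triple_def sl2_triple_axioms_def bilinear_algebra_def
        bilinear_algebra_axioms_def EH FH EF)
  have subspace_N: "subspace N"
    unfolding N_eq by (rule subspace_span)
  have subspace_J: "subspace J"
    unfolding J_basis(5)[symmetric] by (rule subspace_span)
  have L_mul_N: "mul a b \<in> N" if "a \<in> L" "b \<in> L" for a b
    using that sl2_mul_closed sl2_jacobian_eq_0 by (simp add: L_def N_def Nset_def)
  have basis_J: "u i \<in> J" "v i \<in> J" if "i \<in> I" for i
    unfolding J_basis(5)[symmetric] using that by (auto intro: span_base)
  have J_mul_L: "mul y a \<in> J" if "y \<in> J" "a \<in> L" for y a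
  proof (rule span_mul_closed[OF _ subspace_J])
    show "y \<in> span (u ` I \<union> v ` I)"
      using that(1) J_basis(5) by simp
    show "a \<in> span {E, H, F}"
      using that(2) unfolding L_def .
    show "mul w b \<in> J" if "w \<in> u ` I \<union> v ` I" "b \<in> {E, H, F}" for w b
      using that J_action basis_J subspace_J by (auto simp: subspace_neg subspace_0)
  qed
  have centroid_N: "\<alpha> x \<in> N" if "\<alpha> \<in> Uops sm mul L" "x \<in> N" for \<alpha> x
    using that U_centroid centroid_Nset unfolding N_def by blast
  have centroid_J: "\<alpha> y \<in> J" if "\<alpha> \<in> Uops sm mul L" "y \<in> J" for \<alpha> y
    using that U_centroid centroid_Jset unfolding J_def by blast
  have "mul x y \<in> N" if "x \<in> N" "y \<in> N" for x y
    using U_centroid subspace_N L_mul_N centroid_N that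
    by (rule span_centroid_images_mul_closed[where U = "Uops sm mul L" and L = L, folded N_eq])
  moreover have "mul x y \<in> J" if "x \<in> N" "y \<in> J" for x y
    using mul_self U_centroid subspace_J J_mul_L centroid_J that
    by (rule span_centroid_images_mul_invariant[where U = "Uops sm mul L" and L = L, folded N_eq])
  ultimately show ?thesis
    by blast
qed

end
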